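(* Consider the downtown bathtub model described in the context with a fixed number $N_s>0$ of suburban commuters, and assume hypercongestion, i.e. that the equilibrium quantity $\theta=\frac{C_s^{b*}v_f}{\alpha L}$ satisfies $\theta>2$. Then: (i) the short-run equilibrium bathtub cost $C_s^{b*}$ is uniquely determined (there is exactly one $\theta>2$ with $N_s=\alpha n_j(\frac1\beta+\frac1\gamma)(\ln\theta+\frac1\theta-1)$); (ii) the introduction of autonomous vehicles, i.e. replacing $\alpha$ by $\eta\alpha$ and $n_j$ by $\xi n_j$ with $\frac{\beta}{\alpha}<\eta\le 1$ and $\xi\ge 1$, may increase or may decrease the short-run equilibrium bathtub cost: there are admissible parameter values for which it increases and admissible parameter values for which it decreases.
   Context: Downtown traffic (bathtub model): the vehicle accumulation $n(t)\ge 0$ in the downtown area evolves as $\dot n(t)=I(t)-G(t)$, with inflow $I(t)$ and outflow $G(t)=n(t)v(t)/L$, where $L>0$ is the downtown trip length and $v(t)=v_f(1-n(t)/n_j)$ (Greenshields), $v_f>0$ free-flow speed, $n_j>0$ jam accumulation. The downtown travel time of a commuter arriving at time $t$ is $T(t)=L/v(t)$. A suburban commuter arriving at work at time $t$ incurs bathtub cost $C_s^b(t)=\alpha T(t)+s(t)$ with $s(t)=\beta(t^*-t)$ for $t\le t^*$ and $s(t)=\gamma(t-t^* )$ for $t>t^*$, where $\alpha,\beta,\gamma>0$ and $t^*$ is the desired arrival time. A short-run equilibrium is a path $n(\cdot)$ and a number $C_s^{b*}$ with $C_s^b(t)=C_s^{b*}$ whenever $n(t)>0$, $C_s^b(t)\ge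 C_s^{b*}$ whenever $n(t)=0$, and $\int_{\mathbb{R}} n(t)v(t)/L\,dt=N_s$. Autonomous vehicles are modelled by a value-of-time reduction $\alpha\mapsto\eta\alpha$ ($\beta/\alpha<\eta\le1$) and a network capacity increase $n_j\mapsto\xi n_j$ ($\xi\ge1$), all other parameters unchanged. *)

theory Defs
  imports Complex_Main
begin

definition bathtub_eq :: "real \<Rightarrow> real \<Rightarrow> real \<Rightarrow> real \<Rightarrow> real \<Rightarrow> real \<Rightarrow> bool" where
  "bathtub_eq \<alpha> \<beta> \<gamma> nj Ns \<theta> \<longleftrightarrow>
     Ns = \<alpha> * nj * (1/\<beta> + 1/\<gamma>) * (ln \<theta> + 1/\<theta> - 1)"

definition hypercongested :: "real \<Rightarrow> real \<Rightarrow> real \<Rightarrow> real \<Rightarrow> real \<Rightarrow> bool" where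
  "hypercongested \<alpha> \<beta> \<gamma> nj Ns \<longleftrightarrow> (\<exists>\<theta>>2. bathtub_eq \<alpha> \<beta> \<gamma> nj Ns \<theta>)"

definition bathtub_cost :: "real \<Rightarrow> real \<Rightarrow> real \<Rightarrow> real \<Rightarrow> real \<Rightarrow> real \<Rightarrow> real \<Rightarrow> real" where
  "bathtub_cost \<alpha> \<beta> \<gamma> L vf nj Ns =
     (THE \<theta>. \<theta> > 2 \<and> bathtub_eq \<alpha> \<beta> \<gamma> nj Ns \<theta>) * \<alpha> * L / vf"

definition admissible :: "real \<Rightarrow> real \<Rightarrow> real \<Rightarrow> real \<Rightarrow> real \<Rightarrow> real \<Rightarrow> real \<Rightarrow> bool" where
  "admissible \<alpha> \<beta> \<gamma> L vf nj Ns \<longleftrightarrow>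
     \<alpha> > 0 \<and> \<beta> > 0 \<and> \<gamma> > 0 \<and> L > 0 \<and> vf > 0 \<and> nj > 0 \<and> Ns > 0"

end

theory Submission
  imports Defs
begin

(* Write g \<theta> = ln \<theta> + 1/\<theta> - 1, so that the equilibrium condition reads
   N_s = \<alpha> n_j (1/\<beta> + 1/\<gamma>) g \<theta>. Since g' \<theta> = (\<theta> - 1)/\<theta>^2 > 0, g is strictly
   increasing on [1, \<infinity>), which gives uniqueness, and the cost is C = \<theta> \<alpha> L / v_f.
   Autonomous vehicles move the equilibrium to the \<theta>' with \<eta> \<xi> g \<theta>' = g \<theta>, multiplying
   the cost by \<eta> \<theta>'/\<theta>. A pure capacity increase (\<eta> = 1 < \<xi>) lowers \<theta> and hence the
   cost. A pure value-of-time reduction (\<xi> = 1) raises \<theta>, and the cost rises exactly when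
   g \<theta> / \<theta> > g \<theta>' / \<theta>', which happens for \<theta> = e^2 and \<theta>' = e^3. *)

definition bathtub_index :: "real \<Rightarrow> real" where
  "bathtub_index \<theta> = ln \<theta> + 1/\<theta> - 1"

lemma bathtub_eq_iff_index:
  "bathtub_eq \<alpha> \<beta> \<gamma> nj Ns \<theta> \<longleftrightarrow> Ns = \<alpha> * nj * (1/\<beta> + 1/\<gamma>) * bathtub_index \<theta>"
  by (simp add: bathtub_eq_def bathtub_index_def)

lemma bathtub_index_has_real_derivative:
  "0 < t \<Longrightarrow> (bathtub_index has_real_derivative (t - 1) / t\<^sup>2) (at t)"
  unfolding bathtub_index_def[abs_def]
  by (rule derivative_eq_intros refl | simp)+ (simp add: field_simps power2_eq_square)

lemma bathtub_index_strict_mono: "strict_mono_on {1..} bathtub_index"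
proof (rule strict_mono_onI)
  fix x y :: real
  assume "x \<in> {1..}" "y \<in> {1..}" "x < y"
  show "bathtub_index x < bathtub_index y"
  proof (rule DERIV_pos_imp_increasing_open[OF \<open>x < y\<close>])
    fix t assume "x < t" "t < y"
    with \<open>x \<in> {1..}\<close> have "1 < t" by simp
    then have "(bathtub_index has_real_derivative (t - 1) / t\<^sup>2) (at t)" "(t - 1) / t\<^sup>2 > 0"
      by (simp_all add: bathtub_index_has_real_derivative)
    then show "\<exists>d. (bathtub_index has_real_derivative d) (at t) \<and> d > 0" by blast
  next
    show "continuous_on {x..y} bathtub_index"
      using \<open>x \<in> {1..}\<close> unfolding bathtub_index_def[abs_def]
      by (intro continuous_intros) auto
  qed
qed

lemma bathtub_index_pos: "1 < \<theta> \<Longrightarrow> 0 < bathtub_index \<theta>"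
  using strict_mono_onD[OF bathtub_index_strict_mono, of 1 \<theta>]
  by (simp add: bathtub_index_def)

lemma bathtub_index_exp: "bathtub_index (exp k) = k - 1 + inverse (exp k)"
  by (simp add: bathtub_index_def inverse_eq_divide)

lemma bathtub_eq_unique:
  assumes "\<alpha> > 0" "\<beta> > 0" "\<gamma> > 0" "nj > 0" "1 \<le> \<theta>" "1 \<le> \<theta>'"
    and "bathtub_eq \<alpha> \<beta> \<gamma> nj Ns \<theta>" "bathtub_eq \<alpha> \<beta> \<gamma> nj Ns \<theta>'"
  shows "\<theta> = \<theta>'"
proof -
  have "\<alpha> * nj * (1/\<beta> + 1/\<gamma>) > 0" using assms(1-4) by (simp add: add_pos_pos)
  with assms(7,8) have "bathtub_index \<theta> = bathtub_index \<theta>'"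
    by (auto simp: bathtub_eq_iff_index)
  with assms(5,6) show ?thesis
    using strict_mono_on_imp_inj_on[OF bathtub_index_strict_mono] by (auto dest: inj_onD)
qed

lemma bathtub_eq_ex1:
  assumes "\<alpha> > 0" "\<beta> > 0" "\<gamma> > 0" "nj > 0" "\<theta> > 2" "bathtub_eq \<alpha> \<beta> \<gamma> nj Ns \<theta>"
  shows "\<exists>!\<theta>. \<theta> > 2 \<and> bathtub_eq \<alpha> \<beta> \<gamma> nj Ns \<theta>"
proof (rule ex1I)
  show "\<theta> > 2 \<and> bathtub_eq \<alpha> \<beta> \<gamma> nj Ns \<theta>" using assms(5,6) by simp
  fix \<theta>' assume "\<theta>' > 2 \<and> bathtub_eq \<alpha> \<beta> \<gamma> nj Ns \<theta>'"
  with assms show "\<theta>' = \<theta>" by (intro bathtub_eq_unique[of \<alpha> \<beta> \<gamma> nj]) auto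
qed

lemma bathtub_cost_eq:
  assumes "\<alpha> > 0" "\<beta> > 0" "\<gamma> > 0" "nj > 0" "\<theta> > 2" "bathtub_eq \<alpha> \<beta> \<gamma> nj Ns \<theta>"
  shows "bathtub_cost \<alpha> \<beta> \<gamma> L vf nj Ns = \<theta> * \<alpha> * L / vf"
  using the1_equality[OF bathtub_eq_ex1[OF assms]] assms(5,6) by (simp add: bathtub_cost_def)

lemma bathtub_eq_rescale:
  assumes "bathtub_eq \<alpha> \<beta> \<gamma> nj Ns \<theta>" "bathtub_index \<theta> = \<eta> * \<xi> * bathtub_index \<theta>'"
  shows "bathtub_eq (\<eta> * \<alpha>) \<beta> \<gamma> (\<xi> * nj) Ns \<theta>'"
  using assms by (simp add: bathtub_eq_iff_index ac_simps)

lemma bathtub_index_exp_2_exp_3: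
  "bathtub_index (exp 3) < 2 * bathtub_index (exp 2)"
  "exp 2 * bathtub_index (exp 3) < exp 3 * bathtub_index (exp 2)"
proof -
  define \<theta> \<theta>' :: real where "\<theta> = exp 2" and "\<theta>' = exp 3"
  have "2 < \<theta>" using exp_ge_add_one_self[of 2] by (simp add: \<theta>_def)
  have "\<theta>' = exp 1 * \<theta>" by (simp add: \<theta>_def \<theta>'_def flip: exp_add)
  with \<open>2 < \<theta>\<close> have "2 * \<theta> \<le> \<theta>'"
    using exp_ge_add_one_self[of 1] by (simp add: mult_right_mono)
  have index: "bathtub_index \<theta> = 1 + inverse \<theta>" "bathtub_index \<theta>' = 2 + inverse \<theta>'"
    by (simp_all add: \<theta>_def \<theta>'_def bathtub_index_exp)
  have "inverse \<theta>' < inverse \<theta>" "0 < inverse \<theta>"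
    using \<open>2 < \<theta>\<close> \<open>2 * \<theta> \<le> \<theta>'\<close> by (simp_all add: less_imp_inverse_less)
  then have "inverse \<theta>' < 2 * inverse \<theta>" by linarith
  then show "bathtub_index (exp 3) < 2 * bathtub_index (exp 2)"
    by (simp add: index flip: \<theta>_def \<theta>'_def)
  have "\<theta> * bathtub_index \<theta>' = 2 * \<theta> + \<theta> / \<theta>'"
    "\<theta>' * bathtub_index \<theta> = \<theta>' + \<theta>' / \<theta>"
    using \<open>2 < \<theta>\<close> \<open>2 * \<theta> \<le> \<theta>'\<close> by (simp_all add: index field_simps)
  moreover have "\<theta> / \<theta>' < 1" "1 < \<theta>' / \<theta>"
    using \<open>2 < \<theta>\<close> \<open>2 * \<theta> \<le> \<theta>'\<close> by (simp_all add: field_simps)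
  ultimately show "exp 2 * bathtub_index (exp 3) < exp 3 * bathtub_index (exp 2)"
    using \<open>2 * \<theta> \<le> \<theta>'\<close> unfolding \<theta>_def \<theta>'_def by linarith
qed

lemma av_may_raise_bathtub_cost:
  "\<exists>\<alpha> \<beta> \<gamma> L vf nj Ns \<eta> \<xi>.
      admissible \<alpha> \<beta> \<gamma> L vf nj Ns \<and> \<beta> / \<alpha> < \<eta> \<and> \<eta> \<le> 1 \<and> \<xi> \<ge> 1 \<and>
      hypercongested \<alpha> \<beta> \<gamma> nj Ns \<and> hypercongested (\<eta> * \<alpha>) \<beta> \<gamma> (\<xi> * nj) Ns \<and>
      bathtub_cost (\<eta> * \<alpha>) \<beta> \<gamma> L vf (\<xi> * nj) Ns > bathtub_cost \<alpha> \<beta> \<gamma> L vf nj Ns"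
proof -
  define \<theta> \<theta>' :: real where "\<theta> = exp 2" and "\<theta>' = exp 3"
  define \<eta> where "\<eta> = bathtub_index \<theta> / bathtub_index \<theta>'"
  define Ns where "Ns = 4 * bathtub_index \<theta>"
  have "2 < \<theta>" "\<theta> < \<theta>'" using exp_ge_add_one_self[of 2] by (simp_all add: \<theta>_def \<theta>'_def)
  then have "2 < \<theta>'" "0 < bathtub_index \<theta>" "0 < bathtub_index \<theta>'"
    "bathtub_index \<theta> < bathtub_index \<theta>'"
    using bathtub_index_pos strict_mono_onD[OF bathtub_index_strict_mono, of \<theta> \<theta>'] by simp_all
  with bathtub_index_exp_2_exp_3 have \<eta>: "1 / 2 < \<eta>" "\<eta> \<le> 1" "\<theta> < \<eta> * \<theta>'"
    by (simp_all add: \<eta>_def \<theta>_def \<theta>'_def field_simps)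
  have old: "bathtub_eq 2 1 1 1 Ns \<theta>"
    by (simp add: bathtub_eq_iff_index Ns_def)
  have new: "bathtub_eq (\<eta> * 2) 1 1 (1 * 1) Ns \<theta>'"
    using \<open>0 < bathtub_index \<theta>'\<close> by (intro bathtub_eq_rescale[OF old]) (simp add: \<eta>_def)
  show ?thesis
  proof (intro exI conjI)
    show "admissible 2 1 1 1 1 1 Ns"
      using \<open>0 < bathtub_index \<theta>\<close> by (simp add: admissible_def Ns_def)
    show "1 / 2 < \<eta>" "\<eta> \<le> 1" "(1::real) \<le> 1" using \<eta> by simp_all
    show "hypercongested 2 1 1 1 Ns" "hypercongested (\<eta> * 2) 1 1 (1 * 1) Ns"
      unfolding hypercongested_def using old new \<open>2 < \<theta>\<close> \<open>2 < \<theta>'\<close> by blast+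
    have "bathtub_cost 2 1 1 1 1 1 Ns = 2 * \<theta>"
      using bathtub_cost_eq[OF _ _ _ _ \<open>2 < \<theta>\<close> old] by simp
    moreover have "bathtub_cost (\<eta> * 2) 1 1 1 1 (1 * 1) Ns = 2 * (\<eta> * \<theta>')"
      using bathtub_cost_eq[OF _ _ _ _ \<open>2 < \<theta>'\<close> new] \<eta> by simp
    ultimately show "bathtub_cost 2 1 1 1 1 1 Ns < bathtub_cost (\<eta> * 2) 1 1 1 1 (1 * 1) Ns"
      using \<eta> by simp
  qed
qed

lemma av_may_lower_bathtub_cost:
  "\<exists>\<alpha> \<beta> \<gamma> L vf nj Ns \<eta> \<xi>.
      admissible \<alpha> \<beta> \<gamma> L vf nj Ns \<and> \<beta> / \<alpha> < \<eta> \<and> \<eta> \<le> 1 \<and> \<xi> \<ge> 1 \<and>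
      hypercongested \<alpha> \<beta> \<gamma> nj Ns \<and> hypercongested (\<eta> * \<alpha>) \<beta> \<gamma> (\<xi> * nj) Ns \<and>
      bathtub_cost (\<eta> * \<alpha>) \<beta> \<gamma> L vf (\<xi> * nj) Ns < bathtub_cost \<alpha> \<beta> \<gamma> L vf nj Ns"
proof -
  define \<xi> where "\<xi> = bathtub_index 4 / bathtub_index 3"
  define Ns where "Ns = 4 * bathtub_index 4"
  have "0 < bathtub_index 3" "bathtub_index 3 < bathtub_index 4"
    using bathtub_index_pos[of 3] strict_mono_onD[OF bathtub_index_strict_mono, of 3 4] by simp_all
  then have "1 \<le> \<xi>" by (simp add: \<xi>_def)
  have old: "bathtub_eq 2 1 1 1 Ns 4"
    by (simp add: bathtub_eq_iff_index Ns_def)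
  have new: "bathtub_eq (1 * 2) 1 1 (\<xi> * 1) Ns 3"
    using \<open>0 < bathtub_index 3\<close> by (intro bathtub_eq_rescale[OF old]) (simp add: \<xi>_def)
  show ?thesis
  proof (intro exI conjI)
    show "admissible 2 1 1 1 1 1 Ns"
      using bathtub_index_pos[of 4] by (simp add: admissible_def Ns_def)
    show "1 / 2 < (1::real)" "(1::real) \<le> 1" by simp_all
    show "1 \<le> \<xi>" by fact
    show "hypercongested 2 1 1 1 Ns" "hypercongested (1 * 2) 1 1 (\<xi> * 1) Ns"
      unfolding hypercongested_def using old new by force+
    show "bathtub_cost (1 * 2) 1 1 1 1 (\<xi> * 1) Ns < bathtub_cost 2 1 1 1 1 1 Ns"
      using bathtub_cost_eq[OF _ _ _ _ _ old] bathtub_cost_eq[OF _ _ _ _ _ new] \<open>1 \<le> \<xi>\<close> by simp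
  qed
qed

theorem proposition1:
  shows
  "(\<forall>\<alpha> \<beta> \<gamma> L vf nj Ns.
      admissible \<alpha> \<beta> \<gamma> L vf nj Ns \<and> hypercongested \<alpha> \<beta> \<gamma> nj Ns \<longrightarrow>
      (\<exists>!\<theta>. \<theta> > 2 \<and> bathtub_eq \<alpha> \<beta> \<gamma> nj Ns \<theta>))
   \<and>
   (\<exists>\<alpha> \<beta> \<gamma> L vf nj Ns \<eta> \<xi>.
      admissible \<alpha> \<beta> \<gamma> L vf nj Ns \<and> \<beta> / \<alpha> < \<eta> \<and> \<eta> \<le> 1 \<and> \<xi> \<ge> 1 \<and>
      hypercongested \<alpha> \<beta> \<gamma> nj Ns \<and> hypercongested (\<eta> * \<alpha>) \<beta> \<gamma> (\<xi> * nj) Ns \<and>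
      bathtub_cost (\<eta> * \<alpha>) \<beta> \<gamma> L vf (\<xi> * nj) Ns > bathtub_cost \<alpha> \<beta> \<gamma> L vf nj Ns)
   \<and>
   (\<exists>\<alpha> \<beta> \<gamma> L vf nj Ns \<eta> \<xi>.
      admissible \<alpha> \<beta> \<gamma> L vf nj Ns \<and> \<beta> / \<alpha> < \<eta> \<and> \<eta> \<le> 1 \<and> \<xi> \<ge> 1 \<and>
      hypercongested \<alpha> \<beta> \<gamma> nj Ns \<and> hypercongested (\<eta> * \<alpha>) \<beta> \<gamma> (\<xi> * nj) Ns \<and>
      bathtub_cost (\<eta> * \<alpha>) \<beta> \<gamma> L vf (\<xi> * nj) Ns < bathtub_cost \<alpha> \<beta> \<gamma> L vf nj Ns)"
proof (intro conjI allI impI av_may_raise_bathtub_cost av_may_lower_bathtub_cost)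
  fix \<alpha> \<beta> \<gamma> L vf nj Ns
  assume "admissible \<alpha> \<beta> \<gamma> L vf nj Ns \<and> hypercongested \<alpha> \<beta> \<gamma> nj Ns"
  then show "\<exists>!\<theta>. \<theta> > 2 \<and> bathtub_eq \<alpha> \<beta> \<gamma> nj Ns \<theta>"
    unfolding admissible_def hypercongested_def using bathtub_eq_ex1 by blast
qed

end
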